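(* Let $A\in\mathcal S_n^+$ with $\operatorname{rk}(A)=\operatorname{st}_+(A)=r$, and suppose $A=BCB^T$ where $B\in\mathbb R_+^{n\times r}$, $C\in\mathbb R_+^{r\times r}$ is symmetric, and at least one of $B$, $C$ is entrywise positive. Then $A\notin\partial\mathcal E_n$.
   Context: $\mathcal S_n^+$ is the set of $n\times n$ symmetric entrywise nonnegative real matrices; $\mathbb R_+^{p\times q}$ the entrywise nonnegative $p\times q$ real matrices. The SNT-rank $\operatorname{st}_+(A)$ of $A\in\mathcal S_n^+$ is the minimal $k$ such that $A=BCB^T$ with $B\in\mathbb R_+^{n\times k}$ and $C\in\mathcal S_k^+$. $\mathcal E_n=\{A\in\mathcal S_n^+:\operatorname{rk}(A)=\operatorname{st}_+(A)\}$. $\partial\mathcal E_n$ is the set of $A\in\mathcal E_n$ such that $A-\alpha uu^T\notin\mathcal E_n$ for every $\alpha>0$, where $u$ is the Perron eigenvector of $A$ (an entrywise nonnegative unit eigenvector for the spectral radius of $A$). *)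

theory Defs
  imports "Jordan_Normal_Form.Spectral_Radius" "Jordan_Normal_Form.DL_Rank"
begin

definition nonneg_mat :: "real mat \<Rightarrow> bool" where
  "nonneg_mat B \<longleftrightarrow> (\<forall>i < dim_row B. \<forall>j < dim_col B. B $$ (i,j) \<ge> 0)"

definition pos_mat :: "real mat \<Rightarrow> bool" where
  "pos_mat B \<longleftrightarrow> (\<forall>i < dim_row B. \<forall>j < dim_col B. B $$ (i,j) > 0)"

definition SNN :: "nat \<Rightarrow> real mat set" where
  "SNN n = {A. A \<in> carrier_mat n n \<and> transpose_mat A = A \<and> nonneg_mat A}"

definition mat_rank :: "real mat \<Rightarrow> nat" where
  "mat_rank A = vec_space.rank (dim_row A) A"

definition snt_fact :: "real mat \<Rightarrow> nat \<Rightarrow> bool" where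
  "snt_fact A k \<longleftrightarrow> (\<exists>B C. B \<in> carrier_mat (dim_row A) k \<and> nonneg_mat B \<and>
       C \<in> SNN k \<and> A = B * C * transpose_mat B)"

definition st_plus :: "real mat \<Rightarrow> nat" where
  "st_plus A = (LEAST k. snt_fact A k)"

definition E_set :: "nat \<Rightarrow> real mat set" where
  "E_set n = {A \<in> SNN n. mat_rank A = st_plus A}"

definition rho :: "real mat \<Rightarrow> real" where
  "rho A = spectral_radius (map_mat complex_of_real A)"

definition perron_vec :: "real mat \<Rightarrow> real vec \<Rightarrow> bool" where
  "perron_vec A u \<longleftrightarrow> u \<in> carrier_vec (dim_row A) \<and> (\<forall>i < dim_vec u. u $ i \<ge> 0) \<and>
      u \<bullet> u = 1 \<and> A *\<^sub>v u = rho A \<cdot>\<^sub>v u"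

definition outer :: "real vec \<Rightarrow> real mat" where
  "outer u = mat (dim_vec u) (dim_vec u) (\<lambda>(i,j). u $ i * u $ j)"

definition bdry_E :: "nat \<Rightarrow> real mat set" where
  "bdry_E n = {A \<in> E_set n. \<exists>u. perron_vec A u \<and>
                  (\<forall>\<alpha>::real. \<alpha> > 0 \<longrightarrow> A - \<alpha> \<cdot>\<^sub>m outer u \<notin> E_set n)}"

end

theory Submission
  imports Defs
begin

text \<open>Let \<open>u\<close> be a Perron vector of \<open>A\<close> with eigenvalue \<open>\<rho>\<close>; \<open>\<rho> > 0\<close> because a nonzero real
  symmetric matrix is not nilpotent. From \<open>A u = \<rho> u\<close> and \<open>A = B C B\<^sup>T\<close> we get \<open>u = B w\<close> with
  \<open>w = C B\<^sup>T u / \<rho>\<close>, hence \<open>A - \<alpha> u u\<^sup>T = B (C - \<alpha> w w\<^sup>T) B\<^sup>T\<close>. For \<open>\<alpha> \<noteq> \<rho>\<close> this matrix still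
  has rank \<open>r\<close>, being \<open>A\<close> times the invertible matrix \<open>I - (\<alpha>/\<rho>) u u\<^sup>T\<close>.
  If \<open>C\<close> is positive, \<open>C - \<alpha> w w\<^sup>T\<close> stays nonnegative for small \<open>\<alpha>\<close>. If \<open>B\<close> is positive, pass to
  the factorisation \<open>(B T) (S C S\<^sup>T) (B T)\<^sup>T\<close> with \<open>S = I + s J\<close>, \<open>T = S\<^sup>-\<^sup>1 = I - t J\<close> (\<open>J\<close> the
  all-ones matrix): for small \<open>s > 0\<close> the factor \<open>B T\<close> is still nonnegative while \<open>S C S\<^sup>T\<close> becomes
  positive, which reduces to the first case.\<close>

lemma rank_mat_mult_le:
  fixes X Y :: "'a::field mat"
  assumes X: "X \<in> carrier_mat n m" and Y: "Y \<in> carrier_mat m p"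
  shows "vec_space.rank n (X * Y) \<le> vec_space.rank n X"
proof -
  interpret vec_space "TYPE('a)" n .
  have XY: "X * Y \<in> carrier_mat n p" using X Y by auto
  obtain S where S: "maximal S (\<lambda>T. T \<subseteq> set (cols (X * Y)) \<and> lin_indpt T)"
    using maximal_exists[of "\<lambda>T. T \<subseteq> set (cols (X * Y)) \<and> lin_indpt T"
        "card (set (cols (X * Y)))" "{}"]
    by (meson List.finite_set card_mono empty_iff empty_subsetI finite_lin_indpt2 rev_finite_subset)
  have Ssub: "S \<subseteq> set (cols (X * Y))" and li: "lin_indpt S"
    using S unfolding maximal_def by auto
  have colsX: "set (cols X) \<subseteq> carrier_vec n" using X cols_dim by blast
  define W where "W = span (set (cols X))"
  have sub: "subspace class_ring W V" unfolding W_def using span_is_subspace[OF colsX] by simp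
  have SW: "S \<subseteq> W"
  proof
    fix v assume "v \<in> S"
    then have "v \<in> set (cols (X * Y))" using Ssub by auto
    then obtain j where j: "j < p" "v = col (X * Y) j" using XY by (auto simp: cols_def)
    then have "v = X *\<^sub>v col Y j" and "col Y j \<in> carrier_vec m" using X Y by auto
    then have "v \<in> col_space X" using X by (auto simp: col_space_eq)
    then show "v \<in> W" unfolding W_def col_space_def .
  qed
  interpret W: vectorspace class_ring "vs W" using sub subspace_is_vs by auto
  have "W.fin_dim" unfolding W_def by (rule fin_dim_span, auto simp: colsX)
  moreover have "W.lin_indpt S"
    using span_li_not_depend(2)[OF SW] sub li by (auto simp: subspace_def)
  ultimately have "card S \<le> W.dim" using W.li_le_dim(2) SW by auto
  then show ?thesis using rank_card_indpt[OF XY S] unfolding rank_def W_def by simp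
qed

lemma pow_mat_add:
  assumes A: "(A :: 'a::semiring_1 mat) \<in> carrier_mat n n"
  shows "A ^\<^sub>m (a + b) = A ^\<^sub>m a * A ^\<^sub>m b"
proof (induct b)
  case (Suc b)
  have "A ^\<^sub>m (a + Suc b) = (A ^\<^sub>m a * A ^\<^sub>m b) * A" using Suc by simp
  also have "\<dots> = A ^\<^sub>m a * (A ^\<^sub>m b * A)" using A by (intro assoc_mult_mat) auto
  finally show ?case by simp
qed (use A in simp)

lemma transpose_pow_mat_symmetric:
  assumes A: "(A :: 'a::comm_semiring_1 mat) \<in> carrier_mat n n" and s: "transpose_mat A = A"
  shows "transpose_mat (A ^\<^sub>m k) = A ^\<^sub>m k"
proof (induct k)
  case (Suc k)
  have "transpose_mat (A ^\<^sub>m Suc k) = A * A ^\<^sub>m k"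
    using A s Suc by (simp add: transpose_mult[of "A ^\<^sub>m k" n n A n])
  also have "\<dots> = A ^\<^sub>m (Suc k)" using pow_mat_add[OF A, of 1 k] by simp
  finally show ?case .
qed (use A in simp)

lemma symmetric_square_eq_zero:
  assumes A: "(A :: real mat) \<in> carrier_mat n n" and s: "transpose_mat A = A"
    and z: "A * A = 0\<^sub>m n n"
  shows "A = 0\<^sub>m n n"
proof (rule eq_matI)
  fix i j assume i: "i < dim_row (0\<^sub>m n n)" and j: "j < dim_col (0\<^sub>m n n)"
  have "(\<Sum>k<n. (A $$ (k,j))\<^sup>2) = (\<Sum>k<n. A $$ (j,k) * A $$ (k,j))"
  proof (rule sum.cong[OF refl])
    fix k assume "k \<in> {..<n}"
    then have "A $$ (j,k) = A $$ (k,j)" using s A j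
      by (metis carrier_matD index_transpose_mat(1) lessThan_iff zero_carrier_mat carrier_matD(2))
    then show "(A $$ (k,j))\<^sup>2 = A $$ (j,k) * A $$ (k,j)" by (simp add: power2_eq_square)
  qed
  also have "\<dots> = (A * A) $$ (j,j)" using A j by (simp add: scalar_prod_def lessThan_atLeast0)
  also have "\<dots> = 0" using z j by simp
  finally have "\<forall>k\<in>{..<n}. (A $$ (k,j))\<^sup>2 = 0"
    by (subst sum_nonneg_eq_0_iff[symmetric]) auto
  then show "A $$ (i,j) = 0\<^sub>m n n $$ (i,j)" using i j by auto
qed (use A in auto)

lemma symmetric_nilpotent_eq_zero:
  assumes A: "(A :: real mat) \<in> carrier_mat n n" and s: "transpose_mat A = A"
  shows "k > 0 \<Longrightarrow> A ^\<^sub>m k = 0\<^sub>m n n \<Longrightarrow> A = 0\<^sub>m n n"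
proof (induct k rule: less_induct)
  case (less k)
  show ?case
  proof (cases "k = 1")
    case True then show ?thesis using less A by simp
  next
    case False
    define m where "m = (k + 1) div 2"
    have m: "m < k" "m > 0" "k \<le> 2 * m" using False less(2) unfolding m_def by auto
    have "A ^\<^sub>m m * A ^\<^sub>m m = A ^\<^sub>m (2 * m - k) * A ^\<^sub>m k"
      using pow_mat_add[OF A, of m m] pow_mat_add[OF A, of "2 * m - k" k] m by (simp add: mult_2)
    also have "\<dots> = 0\<^sub>m n n" using less(3) A by simp
    finally have "A ^\<^sub>m m = 0\<^sub>m n n"
      using symmetric_square_eq_zero[of "A ^\<^sub>m m" n] A transpose_pow_mat_symmetric[OF A s] by auto
    then show ?thesis using less(1)[OF m(1) m(2)] by auto
  qed
qed

text \<open>The diagonal entries of the Jordan blocks are eigenvalues; they all vanish, so every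
  block is nilpotent of index at most \<open>n\<close>.\<close>

lemma pow_mat_eq_zero_if_spectral_radius_zero:
  fixes A :: "complex mat"
  assumes A: "A \<in> carrier_mat n n" and n: "n > 0" and r0: "spectral_radius A \<le> 0"
  shows "A ^\<^sub>m n = 0\<^sub>m n n"
proof -
  from char_poly_factorized[OF A] obtain as where "char_poly A = (\<Prod>a\<leftarrow>as. [:- a, 1:])" by auto
  from jordan_nf_exists[OF A this] obtain n_as where jnf: "jordan_nf A n_as" by auto
  from jordan_nf_powE[OF A jnf] obtain P Q where PQ: "P \<in> carrier_mat n n" "Q \<in> carrier_mat n n"
    and cp: "char_poly A = (\<Prod>(na, a)\<leftarrow>n_as. [:- a, 1:] ^ na)"
    and pw: "\<And>k. A ^\<^sub>m k = P * (jordan_matrix n_as) ^\<^sub>m k * Q" by blast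
  define J where "J = jordan_matrix n_as"
  from jnf have sim: "similar_mat A J" and nz0: "0 \<notin> fst ` set n_as"
    unfolding jordan_nf_def J_def by auto
  from similar_matD[OF sim] obtain n' P' Q' where "{A, J, P', Q'} \<subseteq> carrier_mat n' n'" by blast
  then have J: "J \<in> carrier_mat n n" using A by auto
  have sumn: "sum_list (map fst n_as) = n"
    using J jordan_matrix_carrier[of n_as] unfolding J_def by auto
  have blk: "jordan_block m a ^\<^sub>m n = 0\<^sub>m m m" if mem: "(m,a) \<in> set n_as" for m a
  proof -
    have "m \<noteq> 0" using nz0 mem by force
    have "poly (char_poly A) a = (\<Prod>x\<leftarrow>n_as. poly (case x of (na, a) \<Rightarrow> [:- a, 1:] ^ na) a)"
      unfolding cp by (induct n_as, auto)
    also have "\<dots> = 0" using mem \<open>m \<noteq> 0\<close> by (subst prod_list_zero_iff) force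
    finally have "a \<in> spectrum A" using spectrum_root_char_poly[OF A] by auto
    then have "norm a \<le> spectral_radius A" using spectral_radius_mem_max(2)[OF A n] by auto
    then have "a = 0" using r0 by (metis norm_le_zero_iff order_trans)
    moreover have "m \<le> n" using mem sumn member_le_sum_list[of m "map fst n_as"] by force
    ultimately show ?thesis by (intro eq_matI) (auto simp: jordan_block_zero_pow)
  qed
  have "J ^\<^sub>m n = diag_block_mat (map (\<lambda>(m, a). jordan_block m a ^\<^sub>m n) n_as)"
    unfolding J_def by (rule jordan_matrix_pow)
  also have "\<dots> = diag_block_mat (map (\<lambda>(m, a). 0\<^sub>m m m) n_as)"
    by (intro arg_cong[of _ _ diag_block_mat] map_cong refl) (auto simp: blk)
  finally have "elements_mat (J ^\<^sub>m n) \<subseteq>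
      {0} \<union> \<Union> (set (map elements_mat (map (\<lambda>(m, a). (0\<^sub>m m m :: complex mat)) n_as)))"
    using elements_diag_block_mat by metis
  also have "\<dots> \<subseteq> {0}" using elements_0_mat by auto
  finally have "elements_mat (J ^\<^sub>m n) \<subseteq> {0}" .
  then have "J ^\<^sub>m n = 0\<^sub>m n n" using J by (intro eq_matI) (auto intro!: elements_matI)
  then show ?thesis using pw[of n] PQ J unfolding J_def[symmetric] by simp
qed

lemma rho_pos_if_symmetric:
  assumes A: "A \<in> carrier_mat n n" and s: "transpose_mat A = A" and nz: "A \<noteq> 0\<^sub>m n n"
  shows "rho A > 0"
proof (rule ccontr)
  assume not_pos: "\<not> rho A > 0"
  define cA where "cA = map_mat complex_of_real A"
  have cA: "cA \<in> carrier_mat n n" using A unfolding cA_def by auto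
  have n: "n > 0" using nz A by (metis eq_matI carrier_matD gr0I not_less_zero index_zero_mat(2,3))
  have "cA ^\<^sub>m n = 0\<^sub>m n n"
    using pow_mat_eq_zero_if_spectral_radius_zero[OF cA n] not_pos unfolding rho_def cA_def by simp
  moreover have "map_mat complex_of_real (A ^\<^sub>m n) = cA ^\<^sub>m n"
    unfolding cA_def by (rule of_real_hom.mat_hom_pow[OF A])
  ultimately have "A ^\<^sub>m n = 0\<^sub>m n n" using A by (intro eq_matI) (auto simp: mat_eq_iff)
  then show False using symmetric_nilpotent_eq_zero[OF A s n] nz by simp
qed

lemma outer_carrier[simp]: "outer u \<in> carrier_mat (dim_vec u) (dim_vec u)"
  unfolding outer_def by auto

lemma outer_dims[simp]: "dim_row (outer u) = dim_vec u" "dim_col (outer u) = dim_vec u"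
  unfolding outer_def by auto

lemma outer_index[simp]: "i < dim_vec u \<Longrightarrow> j < dim_vec u \<Longrightarrow> outer u $$ (i,j) = u $ i * u $ j"
  unfolding outer_def by auto

lemma index_mult_mat_vec_sum:
  "A \<in> carrier_mat n m \<Longrightarrow> v \<in> carrier_vec m \<Longrightarrow> i < n \<Longrightarrow> (A *\<^sub>v v) $ i = (\<Sum>k<m. A $$ (i,k) * v $ k)"
  by (auto simp: scalar_prod_def lessThan_atLeast0)

lemma mult_outer_transpose:
  assumes B: "B \<in> carrier_mat n m" and w: "w \<in> carrier_vec m"
  shows "B * outer w * transpose_mat B = outer (B *\<^sub>v w)"
proof (rule eq_matI)
  fix i j assume "i < dim_row (outer (B *\<^sub>v w))" and "j < dim_col (outer (B *\<^sub>v w))"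
  then have i: "i < n" and j: "j < n" using B by auto
  have "(B * outer w * transpose_mat B) $$ (i,j)
      = (\<Sum>k<m. (\<Sum>l<m. B $$ (i,l) * (w $ l * w $ k)) * B $$ (j,k))"
    using B w i j by (simp add: scalar_prod_def lessThan_atLeast0)
  also have "\<dots> = (\<Sum>l<m. B $$ (i,l) * w $ l) * (\<Sum>k<m. B $$ (j,k) * w $ k)"
    by (simp add: sum_distrib_left sum_distrib_right mult_ac)
  also have "\<dots> = (B *\<^sub>v w) $ i * (B *\<^sub>v w) $ j"
    by (simp only: index_mult_mat_vec_sum[OF B w i] index_mult_mat_vec_sum[OF B w j])
  also have "\<dots> = outer (B *\<^sub>v w) $$ (i,j)" using B w i j by simp
  finally show "(B * outer w * transpose_mat B) $$ (i,j) = outer (B *\<^sub>v w) $$ (i,j)" .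
qed (use B w in auto)

lemma mult_outer_eigenvector:
  assumes A: "A \<in> carrier_mat n n" and u: "u \<in> carrier_vec n" and ev: "A *\<^sub>v u = c \<cdot>\<^sub>v u"
  shows "A * outer u = c \<cdot>\<^sub>m outer u"
proof (rule eq_matI)
  fix i j assume "i < dim_row (c \<cdot>\<^sub>m outer u)" and "j < dim_col (c \<cdot>\<^sub>m outer u)"
  then have i: "i < n" and j: "j < n" using u by auto
  have "(A * outer u) $$ (i,j) = (\<Sum>k<n. A $$ (i,k) * (u $ k * u $ j))"
    using A u i j by (simp add: scalar_prod_def lessThan_atLeast0)
  also have "\<dots> = (A *\<^sub>v u) $ i * u $ j"
    by (simp add: index_mult_mat_vec_sum[OF A u i] sum_distrib_left mult_ac)
  also have "\<dots> = (c \<cdot>\<^sub>m outer u) $$ (i,j)" using ev i j u by simp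
  finally show "(A * outer u) $$ (i,j) = (c \<cdot>\<^sub>m outer u) $$ (i,j)" .
qed (use A u in auto)

lemma outer_idem:
  assumes u: "u \<in> carrier_vec n" and nu: "u \<bullet> u = 1"
  shows "outer u * outer u = outer u"
proof (rule eq_matI)
  fix i j assume "i < dim_row (outer u)" and "j < dim_col (outer u)"
  then have i: "i < n" and j: "j < n" using u by auto
  have "(outer u * outer u) $$ (i,j) = u $ i * u $ j * (\<Sum>k<n. u $ k * u $ k)"
    using u i j by (simp add: scalar_prod_def lessThan_atLeast0 sum_distrib_left mult_ac)
  also have "(\<Sum>k<n. u $ k * u $ k) = 1" using nu u by (simp add: scalar_prod_def lessThan_atLeast0)
  finally show "(outer u * outer u) $$ (i,j) = outer u $$ (i,j)" using i j u by simp
qed (use u in auto)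

lemma idempotent_update_inverse:
  fixes P :: "'a::field mat"
  assumes P: "P \<in> carrier_mat n n" and PP: "P * P = P" and b: "\<beta> \<noteq> 1"
  shows "(1\<^sub>m n - \<beta> \<cdot>\<^sub>m P) * (1\<^sub>m n + (\<beta> / (1 - \<beta>)) \<cdot>\<^sub>m P) = 1\<^sub>m n"
proof -
  define M where "M = 1\<^sub>m n - \<beta> \<cdot>\<^sub>m P"
  have M: "M \<in> carrier_mat n n" using P unfolding M_def by auto
  have "M * P = 1\<^sub>m n * P - (\<beta> \<cdot>\<^sub>m P) * P"
    unfolding M_def using P by (intro minus_mult_distrib_mat[of _ n n]) auto
  also have "\<dots> = P - \<beta> \<cdot>\<^sub>m P" using P PP by (simp add: mult_smult_assoc_mat)
  also have "\<dots> = (1 - \<beta>) \<cdot>\<^sub>m P" using P by (intro eq_matI) (auto simp: algebra_simps)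
  finally have MP: "M * P = (1 - \<beta>) \<cdot>\<^sub>m P" .
  have "M * (1\<^sub>m n + (\<beta> / (1 - \<beta>)) \<cdot>\<^sub>m P) = M * 1\<^sub>m n + M * ((\<beta> / (1 - \<beta>)) \<cdot>\<^sub>m P)"
    using M P by (intro mult_add_distrib_mat[of _ n n]) auto
  also have "\<dots> = M + (\<beta> / (1 - \<beta>)) \<cdot>\<^sub>m (M * P)" using M P by (simp add: mult_smult_distrib)
  also have "\<dots> = 1\<^sub>m n - \<beta> \<cdot>\<^sub>m P + (\<beta> / (1 - \<beta>)) \<cdot>\<^sub>m ((1 - \<beta>) \<cdot>\<^sub>m P)"
    unfolding MP by (simp add: M_def)
  also have "\<dots> = 1\<^sub>m n" using P b by (intro eq_matI) auto
  finally show ?thesis unfolding M_def .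
qed
lemma rank_minus_smult_outer_eigenvector:
  fixes A :: "real mat"
  assumes A: "A \<in> carrier_mat n n" and u: "u \<in> carrier_vec n" and nu: "u \<bullet> u = 1"
    and ev: "A *\<^sub>v u = \<rho> \<cdot>\<^sub>v u" and \<rho>: "\<rho> \<noteq> 0" and \<alpha>: "\<alpha> \<noteq> \<rho>"
  shows "mat_rank (A - \<alpha> \<cdot>\<^sub>m outer u) = mat_rank A"
proof -
  define P where "P = outer u"
  define \<beta> where "\<beta> = \<alpha> / \<rho>"
  define M where "M = 1\<^sub>m n - \<beta> \<cdot>\<^sub>m P"
  define N where "N = 1\<^sub>m n + (\<beta> / (1 - \<beta>)) \<cdot>\<^sub>m P"
  have P: "P \<in> carrier_mat n n" using u unfolding P_def by auto
  have M: "M \<in> carrier_mat n n" and N: "N \<in> carrier_mat n n" using P unfolding M_def N_def by auto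
  have MN: "M * N = 1\<^sub>m n" unfolding M_def N_def
    by (rule idempotent_update_inverse[OF P]) (use outer_idem[OF u nu] \<alpha> \<rho> in \<open>auto simp: P_def \<beta>_def\<close>)
  have "A * M = A * 1\<^sub>m n - A * (\<beta> \<cdot>\<^sub>m P)"
    unfolding M_def using A P by (intro mult_minus_distrib_mat[of _ n n]) auto
  also have "\<dots> = A - \<beta> \<cdot>\<^sub>m (\<rho> \<cdot>\<^sub>m P)"
    using A P mult_outer_eigenvector[OF A u ev] by (simp add: mult_smult_distrib P_def)
  also have "\<beta> \<cdot>\<^sub>m (\<rho> \<cdot>\<^sub>m P) = \<alpha> \<cdot>\<^sub>m P" using \<rho> by (intro eq_matI) (auto simp: \<beta>_def)
  finally have AM: "A * M = A - \<alpha> \<cdot>\<^sub>m P" .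
  have AP: "A - \<alpha> \<cdot>\<^sub>m P \<in> carrier_mat n n" using A P by auto
  have "(A - \<alpha> \<cdot>\<^sub>m P) * N = A" using A M N MN by (simp flip: AM)
  then have "vec_space.rank n A \<le> vec_space.rank n (A - \<alpha> \<cdot>\<^sub>m P)"
    using rank_mat_mult_le[OF AP N] by simp
  moreover have "vec_space.rank n (A - \<alpha> \<cdot>\<^sub>m P) \<le> vec_space.rank n A"
    unfolding AM[symmetric] by (rule rank_mat_mult_le[OF A M])
  ultimately show ?thesis unfolding mat_rank_def P_def using A u by simp
qed

lemma transpose_minus_smult_outer:
  assumes X: "X \<in> carrier_mat n n" and s: "transpose_mat X = X" and u: "u \<in> carrier_vec n"
  shows "transpose_mat (X - \<alpha> \<cdot>\<^sub>m outer u) = X - \<alpha> \<cdot>\<^sub>m outer u"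
proof (rule eq_matI)
  fix i j assume "i < dim_row (X - \<alpha> \<cdot>\<^sub>m outer u)" "j < dim_col (X - \<alpha> \<cdot>\<^sub>m outer u)"
  then have ij: "i < n" "j < n" using u by auto
  then have "X $$ (j,i) = X $$ (i,j)" using X by (subst s[symmetric]) simp
  then show "transpose_mat (X - \<alpha> \<cdot>\<^sub>m outer u) $$ (i,j) = (X - \<alpha> \<cdot>\<^sub>m outer u) $$ (i,j)"
    using ij X u by simp
qed (use X u in auto)

lemma congruence_minus_smult_outer:
  assumes B: "B \<in> carrier_mat n m" and C: "C \<in> carrier_mat m m" and w: "w \<in> carrier_vec m"
  shows "B * (C - \<alpha> \<cdot>\<^sub>m outer w) * transpose_mat B = B * C * transpose_mat B - \<alpha> \<cdot>\<^sub>m outer (B *\<^sub>v w)"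
proof -
  have W: "outer w \<in> carrier_mat m m" using w by auto
  have "B * (C - \<alpha> \<cdot>\<^sub>m outer w) = B * C - \<alpha> \<cdot>\<^sub>m (B * outer w)"
    using B C W by (simp add: mult_minus_distrib_mat[of _ n m] mult_smult_distrib)
  then have "B * (C - \<alpha> \<cdot>\<^sub>m outer w) * transpose_mat B
      = B * C * transpose_mat B - \<alpha> \<cdot>\<^sub>m (B * outer w * transpose_mat B)"
    using B C W by (simp add: minus_mult_distrib_mat[of _ n m] mult_smult_assoc_mat[of _ n m])
  then show ?thesis using mult_outer_transpose[OF B w] by simp
qed

lemma congruence_cancel:
  fixes B S T X :: "'a::comm_semiring_1 mat"
  assumes B: "B \<in> carrier_mat n m" and S: "S \<in> carrier_mat m m" and T: "T \<in> carrier_mat m m"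
    and TS: "T * S = 1\<^sub>m m" and X: "X \<in> carrier_mat m m"
  shows "(B * T) * (S * X * transpose_mat S) * transpose_mat (B * T) = B * X * transpose_mat B"
proof -
  have ST: "transpose_mat S * transpose_mat T = 1\<^sub>m m"
    using transpose_mult[OF T S] TS by simp
  have "(B * T) * (S * X * transpose_mat S) * transpose_mat (B * T)
      = B * ((T * S) * X * (transpose_mat S * transpose_mat T)) * transpose_mat B"
    using B S T X by (simp add: transpose_mult[OF B T] assoc_mult_mat[of _ n m _ m _ m]
        assoc_mult_mat[of _ n m _ m _ n] assoc_mult_mat[of _ m m _ m _ m] assoc_mult_mat[of _ m m _ m _ n])
  then show ?thesis using TS ST X by simp
qed

lemma nonneg_mat_mult:
  assumes X: "X \<in> carrier_mat a b" and Y: "Y \<in> carrier_mat b c"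
    and nX: "nonneg_mat X" and nY: "nonneg_mat Y"
  shows "nonneg_mat (X * Y)"
  unfolding nonneg_mat_def
proof (intro allI impI)
  fix i j assume i: "i < dim_row (X * Y)" and j: "j < dim_col (X * Y)"
  have "(X * Y) $$ (i,j) = (\<Sum>k<b. X $$ (i,k) * Y $$ (k,j))"
    using X Y i j by (simp add: scalar_prod_def lessThan_atLeast0)
  also have "\<dots> \<ge> 0" using nX nY X Y i j unfolding nonneg_mat_def
    by (intro sum_nonneg mult_nonneg_nonneg) auto
  finally show "(X * Y) $$ (i,j) \<ge> 0" .
qed

lemma nonneg_mat_transpose: "nonneg_mat X \<Longrightarrow> nonneg_mat (transpose_mat X)"
  unfolding nonneg_mat_def by auto

lemma E_setI:
  assumes A: "A \<in> carrier_mat n n" and s: "transpose_mat A = A" and rk: "mat_rank A = r"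
    and B: "B \<in> carrier_mat n r" and nB: "nonneg_mat B" and C: "C \<in> SNN r"
    and eq: "A = B * C * transpose_mat B"
  shows "A \<in> E_set n"
proof -
  have Cc: "C \<in> carrier_mat r r" and nC: "nonneg_mat C" using C unfolding SNN_def by auto
  have "nonneg_mat (B * C)" by (rule nonneg_mat_mult[OF B Cc nB nC])
  then have nA: "nonneg_mat A" unfolding eq
    by (rule nonneg_mat_mult[OF mult_carrier_mat[OF B Cc] transpose_carrier_mat[THEN iffD2, OF B]
          _ nonneg_mat_transpose[OF nB]])
  have snt: "snt_fact A r" unfolding snt_fact_def using A B nB C eq by auto
  then have "st_plus A \<le> r" unfolding st_plus_def by (rule Least_le)
  moreover have "r \<le> st_plus A"
  proof -
    let ?k = "st_plus A"
    have "snt_fact A ?k" unfolding st_plus_def by (rule LeastI[of "snt_fact A", OF snt])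
    then obtain B' C' where B': "B' \<in> carrier_mat n ?k" and C': "C' \<in> carrier_mat ?k ?k"
      and eq': "A = B' * C' * transpose_mat B'"
      using A unfolding snt_fact_def SNN_def by blast
    have "A = B' * (C' * transpose_mat B')" using eq' B' C' by simp
    then have "vec_space.rank n A \<le> vec_space.rank n B'"
      using rank_mat_mult_le[OF B', of "C' * transpose_mat B'" n] B' C' by simp
    also have "\<dots> \<le> ?k" using vec_space.rank_le_nc[OF B'] .
    finally show ?thesis using rk A unfolding mat_rank_def by simp
  qed
  ultimately show ?thesis unfolding E_set_def SNN_def using A s nA rk by auto
qed

lemma pos_mat_lower_bound:
  assumes "pos_mat M"
  shows "\<exists>m>0. \<forall>i<dim_row M. \<forall>j<dim_col M. m \<le> M $$ (i,j)"
proof -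
  define S where "S = insert 1 ((\<lambda>(i,j). M $$ (i,j)) ` ({..<dim_row M} \<times> {..<dim_col M}))"
  have fin: "finite S" unfolding S_def by simp
  have "Min S \<in> S" using Min_in[OF fin] unfolding S_def by blast
  then have "Min S > 0" using assms unfolding S_def pos_mat_def by auto
  moreover have "Min S \<le> M $$ (i,j)" if "i < dim_row M" "j < dim_col M" for i j
    using Min_le[OF fin, of "M $$ (i,j)"] that unfolding S_def by auto
  ultimately show ?thesis by blast
qed

lemma abs_mult_le_sum_squares:
  fixes w :: "real vec"
  assumes i: "i < m" and j: "j < m"
  shows "\<bar>w $ i * w $ j\<bar> \<le> (\<Sum>k<m. (w $ k)\<^sup>2)"
proof -
  have "\<bar>w $ i * w $ j\<bar> \<le> ((w $ i)\<^sup>2 + (w $ j)\<^sup>2) / 2"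
    using sum_squares_bound[of "\<bar>w $ i\<bar>" "\<bar>w $ j\<bar>"]
    by (simp add: abs_mult field_simps power2_eq_square)
  also have "\<dots> \<le> (\<Sum>k<m. (w $ k)\<^sup>2)"
    using member_le_sum[of i "{..<m}" "\<lambda>k. (w $ k)\<^sup>2"] member_le_sum[of j "{..<m}" "\<lambda>k. (w $ k)\<^sup>2"] i j
    by simp
  finally show ?thesis .
qed

lemma nonneg_minus_smult_outer_if_pos:
  assumes M: "M \<in> carrier_mat r r" and pM: "pos_mat M" and v: "v \<in> carrier_vec r"
  shows "\<exists>a0>0. \<forall>\<alpha>\<in>{0..a0}. nonneg_mat (M - \<alpha> \<cdot>\<^sub>m outer v)"
proof -
  obtain m where m: "m > 0" "\<forall>i<r. \<forall>j<r. m \<le> M $$ (i,j)"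
    using pos_mat_lower_bound[OF pM] M by auto
  define V where "V = 1 + (\<Sum>k<r. (v $ k)\<^sup>2)"
  have V: "V > 0" unfolding V_def by (smt (verit) sum_nonneg zero_le_power2)
  have "nonneg_mat (M - \<alpha> \<cdot>\<^sub>m outer v)" if \<alpha>: "0 \<le> \<alpha>" "\<alpha> \<le> m / V" for \<alpha>
    unfolding nonneg_mat_def
  proof (intro allI impI)
    fix i j assume "i < dim_row (M - \<alpha> \<cdot>\<^sub>m outer v)" and "j < dim_col (M - \<alpha> \<cdot>\<^sub>m outer v)"
    then have i: "i < r" and j: "j < r" using M v by auto
    have "\<alpha> * (v $ i * v $ j) \<le> \<alpha> * V"
      using abs_mult_le_sum_squares[OF i j, of v] \<alpha> unfolding V_def by (intro mult_left_mono) auto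
    also have "\<dots> \<le> m" using \<alpha> V by (simp add: field_simps)
    also have "\<dots> \<le> M $$ (i,j)" using m i j by auto
    finally show "(M - \<alpha> \<cdot>\<^sub>m outer v) $$ (i,j) \<ge> 0" using M v i j by simp
  qed
  then show ?thesis using m V by (intro exI[of _ "m / V"]) auto
qed

definition all_ones_mat :: "nat \<Rightarrow> 'a::one mat" where
  "all_ones_mat n = mat n n (\<lambda>_. 1)"

lemma all_ones_mat_carrier[simp]: "all_ones_mat n \<in> carrier_mat n n"
  unfolding all_ones_mat_def by simp

lemma all_ones_mat_dims[simp]: "dim_row (all_ones_mat n) = n" "dim_col (all_ones_mat n) = n"
  unfolding all_ones_mat_def by simp_all

lemma all_ones_mat_index[simp]: "i < n \<Longrightarrow> j < n \<Longrightarrow> all_ones_mat n $$ (i,j) = 1"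
  unfolding all_ones_mat_def by simp

lemma all_ones_mat_square: "all_ones_mat n * all_ones_mat n = (real n) \<cdot>\<^sub>m all_ones_mat n"
  by (intro eq_matI) (auto simp: scalar_prod_def all_ones_mat_def)

lemma one_minus_all_ones_inverse:
  fixes s :: real
  assumes d: "1 + real n * s \<noteq> 0"
  shows "(1\<^sub>m n - (s / (1 + real n * s)) \<cdot>\<^sub>m all_ones_mat n) * (1\<^sub>m n + s \<cdot>\<^sub>m all_ones_mat n) = 1\<^sub>m n"
proof -
  define t where "t = s / (1 + real n * s)"
  define J where "J = (all_ones_mat n :: real mat)"
  define T where "T = 1\<^sub>m n - t \<cdot>\<^sub>m J"
  have J: "J \<in> carrier_mat n n" and T: "T \<in> carrier_mat n n" unfolding J_def T_def by auto
  have "T * J = 1\<^sub>m n * J - (t \<cdot>\<^sub>m J) * J"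
    unfolding T_def using J by (intro minus_mult_distrib_mat[of _ n n]) auto
  also have "\<dots> = J - t \<cdot>\<^sub>m (J * J)" using J by (simp add: mult_smult_assoc_mat)
  also have "\<dots> = (1 - t * real n) \<cdot>\<^sub>m J"
    unfolding J_def all_ones_mat_square by (intro eq_matI) (auto simp: algebra_simps)
  finally have TJ: "T * J = (1 - t * real n) \<cdot>\<^sub>m J" .
  have "T * (1\<^sub>m n + s \<cdot>\<^sub>m J) = T * 1\<^sub>m n + T * (s \<cdot>\<^sub>m J)"
    using T J by (intro mult_add_distrib_mat[of _ n n]) auto
  also have "\<dots> = T + s \<cdot>\<^sub>m (T * J)" using T J by (simp add: mult_smult_distrib)
  also have "\<dots> = 1\<^sub>m n - t \<cdot>\<^sub>m J + s \<cdot>\<^sub>m ((1 - t * real n) \<cdot>\<^sub>m J)"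
    unfolding TJ by (simp add: T_def)
  also have "\<dots> = 1\<^sub>m n"
  proof -
    have st: "s * (1 - t * real n) = t" unfolding t_def using d by (simp add: field_simps)
    show ?thesis unfolding J_def by (intro eq_matI) (auto simp: st)
  qed
  finally show ?thesis unfolding T_def J_def t_def .
qed

lemma nonneg_mult_one_minus_all_ones:
  fixes B :: "real mat"
  assumes B: "B \<in> carrier_mat n r"
    and small: "\<And>i j. i < n \<Longrightarrow> j < r \<Longrightarrow> t * (\<Sum>k<r. B $$ (i,k)) \<le> B $$ (i,j)"
  shows "nonneg_mat (B * (1\<^sub>m r - t \<cdot>\<^sub>m all_ones_mat r))"
  unfolding nonneg_mat_def
proof (intro allI impI)
  fix i j assume "i < dim_row (B * (1\<^sub>m r - t \<cdot>\<^sub>m all_ones_mat r))"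
    and "j < dim_col (B * (1\<^sub>m r - t \<cdot>\<^sub>m all_ones_mat r))"
  then have i: "i < n" and j: "j < r" using B by auto
  have "B * (1\<^sub>m r - t \<cdot>\<^sub>m all_ones_mat r) = B * 1\<^sub>m r - B * (t \<cdot>\<^sub>m all_ones_mat r)"
    using B by (intro mult_minus_distrib_mat[of _ n r]) auto
  also have "\<dots> = B - t \<cdot>\<^sub>m (B * all_ones_mat r)" using B by (simp add: mult_smult_distrib[OF B all_ones_mat_carrier])
  finally have "B * (1\<^sub>m r - t \<cdot>\<^sub>m all_ones_mat r) = B - t \<cdot>\<^sub>m (B * all_ones_mat r)" .
  moreover have "(B * all_ones_mat r) $$ (i,j) = (\<Sum>k<r. B $$ (i,k))"
    using i j B by (simp add: scalar_prod_def lessThan_atLeast0)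
  ultimately show "(B * (1\<^sub>m r - t \<cdot>\<^sub>m all_ones_mat r)) $$ (i,j) \<ge> 0"
    using small[OF i j] i j B by simp
qed

lemma pos_mat_congruence_one_plus_all_ones:
  fixes C :: "real mat"
  assumes s: "s > 0" and C: "C \<in> carrier_mat r r" and nC: "nonneg_mat C" and nz: "C \<noteq> 0\<^sub>m r r"
  shows "pos_mat ((1\<^sub>m r + s \<cdot>\<^sub>m all_ones_mat r) * C * transpose_mat (1\<^sub>m r + s \<cdot>\<^sub>m all_ones_mat r))"
proof -
  define S where "S = 1\<^sub>m r + s \<cdot>\<^sub>m (all_ones_mat r :: real mat)"
  have S: "S \<in> carrier_mat r r" unfolding S_def by auto
  have Sge: "S $$ (x,y) \<ge> s" if "x < r" "y < r" for x y using that unfolding S_def by auto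
  have Cge: "C $$ (l,k) \<ge> 0" if "l < r" "k < r" for l k using that nC C unfolding nonneg_mat_def by auto
  obtain l0 k0 where lk: "l0 < r" "k0 < r" "C $$ (l0,k0) \<noteq> 0"
    using nz C by (metis carrier_matD eq_matI index_zero_mat(1,2,3))
  have "0 < s * s * C $$ (l0,k0)" using lk Cge s by (simp add: order_le_neq_trans)
  also have "\<dots> \<le> s * s * (\<Sum>l<r. \<Sum>k<r. C $$ (l,k))"
  proof -
    have "C $$ (l0,k0) \<le> (\<Sum>k<r. C $$ (l0,k))"
      using lk Cge by (intro member_le_sum) auto
    also have "\<dots> \<le> (\<Sum>l<r. \<Sum>k<r. C $$ (l,k))"
      using lk Cge by (intro member_le_sum[of l0 "{..<r}" "\<lambda>l. \<Sum>k<r. C $$ (l,k)"] sum_nonneg) auto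
    finally show ?thesis using s by simp
  qed
  finally have pos_sum: "0 < s * s * (\<Sum>l<r. \<Sum>k<r. C $$ (l,k))" .
  have "(S * C * transpose_mat S) $$ (i,j) > 0" if ij: "i < r" "j < r" for i j
  proof -
    have "s * s * (\<Sum>l<r. \<Sum>k<r. C $$ (l,k)) = (\<Sum>l<r. s * (\<Sum>k<r. C $$ (l,k) * s))"
      by (simp add: sum_distrib_left sum_distrib_right mult_ac)
    also have "\<dots> \<le> (\<Sum>l<r. S $$ (i,l) * (\<Sum>k<r. C $$ (l,k) * S $$ (j,k)))"
      using Sge ij Cge s order_trans[OF less_imp_le[OF s] Sge]
      by (intro sum_mono mult_mono mult_left_mono sum_nonneg mult_nonneg_nonneg) auto
    also have "\<dots> = (S * C * transpose_mat S) $$ (i,j)"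
      using S C ij by (simp add: scalar_prod_def lessThan_atLeast0)
    finally show ?thesis using pos_sum by linarith
  qed
  then show ?thesis unfolding pos_mat_def S_def[symmetric] using S C by auto
qed

lemma exists_congruence_to_pos_mat:
  fixes B C :: "real mat"
  assumes B: "B \<in> carrier_mat n r" and nB: "nonneg_mat B"
    and C: "C \<in> carrier_mat r r" and nC: "nonneg_mat C" and nz: "C \<noteq> 0\<^sub>m r r"
    and pos: "pos_mat B \<or> pos_mat C"
  shows "\<exists>S T. S \<in> carrier_mat r r \<and> T \<in> carrier_mat r r \<and> T * S = 1\<^sub>m r
    \<and> nonneg_mat (B * T) \<and> pos_mat (S * C * transpose_mat S)"
proof (cases "pos_mat C")
  case True
  then show ?thesis using B C nB by (intro exI[of _ "1\<^sub>m r"]) auto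
next
  case False
  then have pB: "pos_mat B" using pos by simp
  obtain b where b: "b > 0" "\<And>i j. i < n \<Longrightarrow> j < r \<Longrightarrow> b \<le> B $$ (i,j)"
    using pos_mat_lower_bound[OF pB] B by auto
  define R where "R = (\<Sum>i<n. \<Sum>k<r. B $$ (i,k))"
  define s where "s = b / (R + 1)"
  define t where "t = s / (1 + real r * s)"
  have Bge: "B $$ (i,k) \<ge> 0" if "i < n" "k < r" for i k using b(1) b(2)[OF that] by linarith
  have R: "R \<ge> 0" unfolding R_def using Bge by (intro sum_nonneg) auto
  have s: "s > 0" unfolding s_def using b R by simp
  have d: "1 \<le> 1 + real r * s" using s by simp
  then have "0 < 1 + real r * s" by linarith
  have "t \<le> s / 1" unfolding t_def using s d \<open>0 < 1 + real r * s\<close> by (intro divide_left_mono) auto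
  then have t: "0 \<le> t" "t \<le> s" unfolding t_def using s d by auto
  have "t * (\<Sum>k<r. B $$ (i,k)) \<le> B $$ (i,j)" if ij: "i < n" "j < r" for i j
  proof -
    have "(\<Sum>k<r. B $$ (i,k)) \<le> R"
      unfolding R_def using ij Bge by (intro member_le_sum[of i "{..<n}"] sum_nonneg) auto
    then have "t * (\<Sum>k<r. B $$ (i,k)) \<le> s * R"
      using t R Bge ij by (intro mult_mono sum_nonneg) auto
    also have "\<dots> \<le> b" unfolding s_def using b R by (simp add: field_simps)
    finally show ?thesis using b(2)[OF ij] by linarith
  qed
  then have "nonneg_mat (B * (1\<^sub>m r - t \<cdot>\<^sub>m all_ones_mat r))"
    by (rule nonneg_mult_one_minus_all_ones[OF B])
  moreover have "(1\<^sub>m r - t \<cdot>\<^sub>m all_ones_mat r) * (1\<^sub>m r + s \<cdot>\<^sub>m all_ones_mat r) = 1\<^sub>m r"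
    unfolding t_def using d by (intro one_minus_all_ones_inverse) linarith
  moreover have "pos_mat ((1\<^sub>m r + s \<cdot>\<^sub>m all_ones_mat r) * C * transpose_mat (1\<^sub>m r + s \<cdot>\<^sub>m all_ones_mat r))"
    by (rule pos_mat_congruence_one_plus_all_ones[OF s C nC nz])
  ultimately show ?thesis by (intro exI conjI) auto
qed

lemma eigenvector_eq_factor_mult:
  fixes A B C :: "'a::field mat"
  assumes B: "B \<in> carrier_mat n r" and C: "C \<in> carrier_mat r r" and u: "u \<in> carrier_vec n"
    and A: "A = B * C * transpose_mat B" and ev: "A *\<^sub>v u = \<rho> \<cdot>\<^sub>v u" and \<rho>: "\<rho> \<noteq> 0"
  shows "B *\<^sub>v ((1 / \<rho>) \<cdot>\<^sub>v (C *\<^sub>v (transpose_mat B *\<^sub>v u))) = u"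
proof -
  have "A *\<^sub>v u = (B * C) *\<^sub>v (transpose_mat B *\<^sub>v u)"
    unfolding A using B C u by (intro assoc_mult_mat_vec[of _ n r _ n]) auto
  also have "\<dots> = B *\<^sub>v (C *\<^sub>v (transpose_mat B *\<^sub>v u))"
    using B C u by (intro assoc_mult_mat_vec[of _ n r _ r]) auto
  finally have "B *\<^sub>v ((1 / \<rho>) \<cdot>\<^sub>v (C *\<^sub>v (transpose_mat B *\<^sub>v u))) = (1 / \<rho>) \<cdot>\<^sub>v (A *\<^sub>v u)"
    using B C u by (simp add: mult_mat_vec[OF B])
  then show ?thesis using ev \<rho> by (simp add: smult_smult_assoc)
qed

lemma transpose_congruence_symmetric:
  fixes S C :: "'a::comm_semiring_1 mat"
  assumes S: "S \<in> carrier_mat m r" and C: "C \<in> carrier_mat r r" and sC: "transpose_mat C = C"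
  shows "transpose_mat (S * C * transpose_mat S) = S * C * transpose_mat S"
proof -
  have "transpose_mat (S * C * transpose_mat S) = S * transpose_mat (S * C)"
    using S C by (intro trans[OF transpose_mult[of "S * C" m r "transpose_mat S" m]]) auto
  also have "\<dots> = S * (C * transpose_mat S)" using transpose_mult[OF S C] sC by simp
  finally show ?thesis using S C by simp
qed

lemma small_minus_smult_outer_in_E_set:
  fixes A B C :: "real mat"
  assumes A: "A \<in> SNN n" and rk: "mat_rank A = r"
    and B: "B \<in> carrier_mat n r" and nB: "nonneg_mat B"
    and C: "C \<in> carrier_mat r r" and nC: "nonneg_mat C" and sC: "transpose_mat C = C"
    and nz: "C \<noteq> 0\<^sub>m r r" and eq: "A = B * C * transpose_mat B" and pos: "pos_mat B \<or> pos_mat C"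
    and u: "u \<in> carrier_vec n" and nu: "u \<bullet> u = 1" and ev: "A *\<^sub>v u = \<rho> \<cdot>\<^sub>v u" and \<rho>: "\<rho> > 0"
  shows "\<exists>a0>0. \<forall>\<alpha>. 0 < \<alpha> \<longrightarrow> \<alpha> \<le> a0 \<longrightarrow> A - \<alpha> \<cdot>\<^sub>m outer u \<in> E_set n"
proof -
  have Ac: "A \<in> carrier_mat n n" and sA: "transpose_mat A = A" using A unfolding SNN_def by auto
  define w where "w = (1 / \<rho>) \<cdot>\<^sub>v (C *\<^sub>v (transpose_mat B *\<^sub>v u))"
  have w: "w \<in> carrier_vec r" unfolding w_def using B C u by auto
  have Bw: "B *\<^sub>v w = u" unfolding w_def using eigenvector_eq_factor_mult[OF B C u eq ev] \<rho> by simp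
  obtain S T where S: "S \<in> carrier_mat r r" and T: "T \<in> carrier_mat r r" and TS: "T * S = 1\<^sub>m r"
    and nBT: "nonneg_mat (B * T)" and pM: "pos_mat (S * C * transpose_mat S)"
    using exists_congruence_to_pos_mat[OF B nB C nC nz pos] by blast
  define M where "M = S * C * transpose_mat S"
  have M: "M \<in> carrier_mat r r" and sM: "transpose_mat M = M"
    unfolding M_def using S C transpose_congruence_symmetric[OF S C sC] by auto
  have Sw: "S *\<^sub>v w \<in> carrier_vec r" and W: "outer (S *\<^sub>v w) \<in> carrier_mat r r"
    using S w by auto
  obtain a where a: "a > 0" and nM: "\<And>\<alpha>. \<alpha> \<in> {0..a} \<Longrightarrow> nonneg_mat (M - \<alpha> \<cdot>\<^sub>m outer (S *\<^sub>v w))"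
    using nonneg_minus_smult_outer_if_pos[OF M pM[folded M_def] Sw] by blast
  have "A - \<alpha> \<cdot>\<^sub>m outer u \<in> E_set n" if \<alpha>: "0 < \<alpha>" "\<alpha> \<le> min a (\<rho> / 2)" for \<alpha>
  proof (rule E_setI)
    have "(B * T) * (M - \<alpha> \<cdot>\<^sub>m outer (S *\<^sub>v w)) * transpose_mat (B * T)
        = (B * T) * (S * (C - \<alpha> \<cdot>\<^sub>m outer w) * transpose_mat S) * transpose_mat (B * T)"
      unfolding M_def using congruence_minus_smult_outer[OF S C w] by simp
    also have "\<dots> = B * (C - \<alpha> \<cdot>\<^sub>m outer w) * transpose_mat B"
      using C w by (intro congruence_cancel[OF B S T TS]) auto
    also have "\<dots> = A - \<alpha> \<cdot>\<^sub>m outer u"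
      unfolding eq congruence_minus_smult_outer[OF B C w] Bw ..
    finally show "A - \<alpha> \<cdot>\<^sub>m outer u
        = (B * T) * (M - \<alpha> \<cdot>\<^sub>m outer (S *\<^sub>v w)) * transpose_mat (B * T)" ..
    show "M - \<alpha> \<cdot>\<^sub>m outer (S *\<^sub>v w) \<in> SNN r"
      unfolding SNN_def using minus_carrier_mat[OF smult_carrier_mat[OF W]] nM \<alpha>
        transpose_minus_smult_outer[OF M sM Sw] by auto
    show "mat_rank (A - \<alpha> \<cdot>\<^sub>m outer u) = r"
      using rank_minus_smult_outer_eigenvector[OF Ac u nu ev] \<alpha> \<rho> rk by auto
  qed (use Ac u sA B T nBT transpose_minus_smult_outer in auto)
  then show ?thesis using a \<rho> by (intro exI[of _ "min a (\<rho> / 2)"]) auto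
qed

theorem mainTheorem12:
  fixes n r :: nat and A B C :: "real mat"
  assumes "A \<in> SNN n"
    and "mat_rank A = r" and "st_plus A = r"
    and "r > 0"
    and "B \<in> carrier_mat n r" and "nonneg_mat B"
    and "C \<in> carrier_mat r r" and "nonneg_mat C" and "transpose_mat C = C"
    and "A = B * C * transpose_mat B"
    and "pos_mat B \<or> pos_mat C"
  shows "A \<notin> bdry_E n"
proof
  note A = assms(1) and rk = assms(2) and B = assms(5,6) and C = assms(7,8,9)
    and eq = assms(10) and pos = assms(11)
  assume "A \<in> bdry_E n"
  then obtain u where u: "perron_vec A u"
    and not_E: "\<And>\<alpha>. \<alpha> > 0 \<Longrightarrow> A - \<alpha> \<cdot>\<^sub>m outer u \<notin> E_set n"
    unfolding bdry_E_def by auto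
  have Ac: "A \<in> carrier_mat n n" and sA: "transpose_mat A = A" using A unfolding SNN_def by auto
  have "vec_space.rank n (0\<^sub>m n n :: real mat) = 0" by (rule vec_space.rank_0I)
  then have "A \<noteq> 0\<^sub>m n n" using rk \<open>r > 0\<close> unfolding mat_rank_def by auto
  then have nz: "C \<noteq> 0\<^sub>m r r" using eq B C by auto
  have "rho A > 0" by (rule rho_pos_if_symmetric[OF Ac sA \<open>A \<noteq> 0\<^sub>m n n\<close>])
  then obtain a0 where "a0 > 0" and "A - a0 \<cdot>\<^sub>m outer u \<in> E_set n"
    using small_minus_smult_outer_in_E_set[OF A rk B C nz eq pos, of u "rho A"] u Ac
    unfolding perron_vec_def by fastforce
  then show False using not_E by blast
qed

end
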